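(* Let $\mathcal{M}$ be the set of compactly supported probability distributions on $\mathbb{R}$ (identified with their cdfs). A mapping $T:\mathcal{M}\to\mathcal{M}$ satisfies $T\circ T_d=T_d\circ T$ for every distortion function $d$ if and only if $T=T^u$ for some utility function $u$.
   Context: Increasing means non-decreasing. A distortion function is an increasing function $d:[0,1]\to[0,1]$ with $d(0)=0$ and $d(1)=1$ (not necessarily continuous). A utility function is an increasing continuous function $u:\mathbb{R}\to\mathbb{R}$. For a distortion function $d$, the probability distortion $T_d:\mathcal{M}\to\mathcal{M}$ is defined by $T_d(F)(x)=\lim_{y\downarrow x} d(F(y))$ for $x\in\mathbb{R}$. For a utility function $u$, the utility transform $T^u:\mathcal{M}\to\mathcal{M}$ maps the distribution of a random variable $X$ to the distribution of $u(X)$, i.e. $T^u(F)=F\circ u^{-1}$ with $F$ viewed as a measure. *)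

theory Defs
  imports "HOL-Analysis.Analysis" "HOL-Probability.Probability"
begin

definition cdfM :: "(real \<Rightarrow> real) set" where
  "cdfM = {F. mono F \<and> (\<forall>x. continuous (at_right x) F) \<and>
             (\<exists>a b. (\<forall>x<a. F x = 0) \<and> (\<forall>x\<ge>b. F x = 1))}"

definition distortion :: "(real \<Rightarrow> real) \<Rightarrow> bool" where
  "distortion d \<longleftrightarrow> mono_on {0..1} d \<and> d ` {0..1} \<subseteq> {0..1} \<and> d 0 = 0 \<and> d 1 = 1"

definition utility :: "(real \<Rightarrow> real) \<Rightarrow> bool" where
  "utility u \<longleftrightarrow> mono u \<and> continuous_on UNIV u"

definition Td :: "(real \<Rightarrow> real) \<Rightarrow> (real \<Rightarrow> real) \<Rightarrow> (real \<Rightarrow> real)" where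
  "Td d F = (\<lambda>x. Lim (at_right x) (\<lambda>y. d (F y)))"

definition Tu :: "(real \<Rightarrow> real) \<Rightarrow> (real \<Rightarrow> real) \<Rightarrow> (real \<Rightarrow> real)" where
  "Tu u F = cdf (distr (interval_measure F) borel u)"

end

theory Submission
  imports Defs
begin

(* A 0-1 valued distortion, the indicator of an upward closed set A of levels, collapses every
   distribution G to the Dirac mass at the threshold Inf (G -` A).  So a map T commuting with all
   distortions sends the Dirac mass at c to the Dirac mass at some u c, and then moves every
   threshold, in particular every quantile, by u.  The quantiles of T applied to uniform
   distributions are the values of u along an interval, which forces u to be increasing and
   continuous, and since quantiles determine a cdf, T = T^u.  Conversely, T^u also moves
   thresholds by u, and the quantiles of T_d G are thresholds of G, so T^u commutes with T_d. *)

lemma cdfM_mono: "F \<in> cdfM \<Longrightarrow> mono F"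
  unfolding cdfM_def by blast

lemma cdfM_continuous_at_right: "F \<in> cdfM \<Longrightarrow> continuous (at_right x) F"
  unfolding cdfM_def by blast

lemma cdfM_support:
  assumes "F \<in> cdfM"
  obtains a b where "\<And>x. x < a \<Longrightarrow> F x = 0" "\<And>x. b \<le> x \<Longrightarrow> F x = 1"
  using assms unfolding cdfM_def by blast

lemma cdfM_I:
  assumes "mono F" "\<And>x. continuous (at_right x) F"
    and "\<And>x. x < a \<Longrightarrow> F x = 0" "\<And>x. b \<le> x \<Longrightarrow> F x = 1"
  shows "F \<in> cdfM"
  using assms unfolding cdfM_def by blast

lemma cdfM_nonneg:
  assumes "F \<in> cdfM" shows "0 \<le> F x"
proof -
  obtain a where "\<And>x. x < a \<Longrightarrow> F x = 0" using cdfM_support[OF assms] by metis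
  then have "F (min x (a - 1)) = 0" by simp
  then show ?thesis using monoD[OF cdfM_mono[OF assms], of "min x (a - 1)" x] by simp
qed

lemma cdfM_le_one:
  assumes "F \<in> cdfM" shows "F x \<le> 1"
proof -
  obtain b where "\<And>x. b \<le> x \<Longrightarrow> F x = 1" using cdfM_support[OF assms] by metis
  then have "F (max x b) = 1" by simp
  then show ?thesis using monoD[OF cdfM_mono[OF assms], of x "max x b"] by simp
qed

lemma distortion_indicator_iff:
  "distortion (indicator A) \<longleftrightarrow>
     0 \<notin> A \<and> 1 \<in> A \<and> (\<forall>s t. 0 \<le> s \<longrightarrow> s \<le> t \<longrightarrow> t \<le> 1 \<longrightarrow> s \<in> A \<longrightarrow> t \<in> A)"
  unfolding distortion_def mono_on_def
  by (auto split: split_indicator) (meson order_trans)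

lemma distortion_indicatorD:
  assumes "distortion (indicator A)"
  shows "0 \<notin> A" "1 \<in> A" "s \<in> A \<Longrightarrow> 0 \<le> s \<Longrightarrow> s \<le> t \<Longrightarrow> t \<le> 1 \<Longrightarrow> t \<in> A"
  using assms unfolding distortion_indicator_iff by blast+

lemma distortion_indicator_greaterThan: "0 \<le> p \<Longrightarrow> p < 1 \<Longrightarrow> distortion (indicator {p<..})"
  unfolding distortion_indicator_iff by auto

lemma distortion_indicator_atLeast: "0 < p \<Longrightarrow> p \<le> 1 \<Longrightarrow> distortion (indicator {p..})"
  unfolding distortion_indicator_iff by auto

lemma distortion_indicator_level_set:
  assumes "distortion d" "0 \<le> p" "p < 1"
  shows "distortion (indicator {s. p < d s})"
proof -
  have "d s \<le> d t" if "0 \<le> s" "s \<le> t" "t \<le> 1" for s t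
    using assms(1) that unfolding distortion_def by (auto intro: mono_onD)
  moreover have "d 0 = 0" "d 1 = 1" using assms(1) unfolding distortion_def by auto
  ultimately show ?thesis
    using assms(2,3) unfolding distortion_indicator_iff by (auto intro: less_le_trans)
qed

context
  fixes G :: "real \<Rightarrow> real" and A :: "real set"
  assumes G: "G \<in> cdfM" and A: "distortion (indicator A)"
begin

lemma cdfM_vimage_upward: "G y \<in> A \<Longrightarrow> y \<le> z \<Longrightarrow> G z \<in> A"
  by (rule distortion_indicatorD(3)[OF A])
    (auto intro: cdfM_nonneg[OF G] cdfM_le_one[OF G] monoD[OF cdfM_mono[OF G]])

lemma cdfM_vimage_nonempty: "G -` A \<noteq> {}"
proof -
  obtain b where "G b = 1" using cdfM_support[OF G] by (metis order_refl)
  then show ?thesis using distortion_indicatorD(2)[OF A] by auto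
qed

lemma cdfM_vimage_bdd_below: "bdd_below (G -` A)"
proof -
  obtain a where "\<And>x. x < a \<Longrightarrow> G x = 0" using cdfM_support[OF G] by metis
  then have "a \<le> y" if "y \<in> G -` A" for y
    using distortion_indicatorD(1)[OF A] that by (force simp: not_le[symmetric])
  then show ?thesis unfolding bdd_below_def by blast
qed

lemma Inf_cdfM_vimage_le: "G y \<in> A \<Longrightarrow> Inf (G -` A) \<le> y"
  using cdfM_vimage_bdd_below by (auto intro: cInf_lower)

lemma cdfM_in_if_Inf_vimage_less: "Inf (G -` A) < z \<Longrightarrow> G z \<in> A"
  using cInf_lessD[OF cdfM_vimage_nonempty] cdfM_vimage_upward by (meson less_imp_le vimageE)

end

lemma Inf_cdfM_vimage_antimono:
  assumes "G \<in> cdfM" "distortion (indicator A)" "distortion (indicator B)" "A \<subseteq> B"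
  shows "Inf (G -` B) \<le> Inf (G -` A)"
  using assms by (intro cInf_superset_mono cdfM_vimage_nonempty cdfM_vimage_bdd_below) auto

(* Only 0 <= p < 1 is meaningful: for p >= 1 the preimage is empty. *)
definition quantile :: "(real \<Rightarrow> real) \<Rightarrow> real \<Rightarrow> real" where
  "quantile G p = Inf (G -` {p<..})"

lemma cdfM_le_if_quantile_le:
  fixes G H :: "real \<Rightarrow> real"
  assumes G: "G \<in> cdfM" and H: "H \<in> cdfM"
    and le: "\<And>p. 0 \<le> p \<Longrightarrow> p < 1 \<Longrightarrow> quantile G p \<le> quantile H p"
  shows "H x \<le> G x"
proof (rule ccontr)
  assume "\<not> H x \<le> G x"
  define p where "p = (G x + H x) / 2"
  have p: "0 \<le> p" "p < 1" "G x < p" "p < H x"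
    using \<open>\<not> H x \<le> G x\<close> cdfM_nonneg[OF G, of x] cdfM_le_one[OF H, of x] by (auto simp: p_def)
  note A = distortion_indicator_greaterThan[OF p(1,2)]
  have "\<forall>\<epsilon>>0. \<exists>\<delta>>0. G (x + \<delta>) - G x < \<epsilon>"
    using cdfM_continuous_at_right[OF G, of x] continuous_at_right_real_increasing[of G x]
      monoD[OF cdfM_mono[OF G]] by blast
  then obtain \<delta> where "\<delta> > 0" "G (x + \<delta>) < p"
    using p(3) by (auto dest: spec[of _ "p - G x"])
  then have "\<not> quantile G p < x + \<delta>"
    using cdfM_in_if_Inf_vimage_less[OF G A, of "x + \<delta>"] unfolding quantile_def by auto
  then have "x < quantile G p" using \<open>\<delta> > 0\<close> by linarith
  moreover have "quantile H p \<le> x"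
    using Inf_cdfM_vimage_le[OF H A] p(4) unfolding quantile_def by simp
  ultimately show False using le[OF p(1,2)] by simp
qed

lemma cdfM_eq_if_quantile_eq:
  assumes "G \<in> cdfM" "H \<in> cdfM" "\<And>p. 0 \<le> p \<Longrightarrow> p < 1 \<Longrightarrow> quantile G p = quantile H p"
  shows "G = H"
  using cdfM_le_if_quantile_le[OF assms(1,2)] cdfM_le_if_quantile_le[OF assms(2,1)] assms(3)
  by (intro ext antisym) auto

definition dirac_cdf :: "real \<Rightarrow> real \<Rightarrow> real" where
  "dirac_cdf c = (\<lambda>x. if c \<le> x then 1 else 0)"

lemma dirac_cdf_cdfM: "dirac_cdf c \<in> cdfM"
proof (rule cdfM_I[of _ c c])
  show "mono (dirac_cdf c)" unfolding dirac_cdf_def mono_def by auto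
  show "continuous (at_right x) (dirac_cdf c)" for x
  proof -
    have "\<forall>\<^sub>F y in at_right x. dirac_cdf c y = dirac_cdf c x"
    proof (cases "c \<le> x")
      case True
      then show ?thesis
        by (auto simp: dirac_cdf_def eventually_at_right_less eventually_at_filter)
    next
      case False
      then show ?thesis
        using eventually_at_right_field[of _ x] by (auto simp: dirac_cdf_def intro!: exI[of _ c])
    qed
    then show ?thesis unfolding continuous_within by (rule tendsto_eventually)
  qed
qed (auto simp: dirac_cdf_def)

lemma dirac_cdf_eq_iff: "dirac_cdf a = dirac_cdf b \<longleftrightarrow> a = b"
  unfolding dirac_cdf_def by (metis linorder_le_cases one_neq_zero order_antisym)

lemma Inf_dirac_cdf_vimage:
  assumes "distortion (indicator A)" shows "Inf (dirac_cdf c -` A) = c"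
proof -
  have "dirac_cdf c -` A = {c..}"
    using distortion_indicatorD(1,2)[OF assms] unfolding dirac_cdf_def by (auto split: if_splits)
  then show ?thesis by simp
qed

definition uniform_cdf :: "real \<Rightarrow> real \<Rightarrow> real \<Rightarrow> real" where
  "uniform_cdf a b = (\<lambda>x. max 0 (min 1 ((x - a) / (b - a))))"

lemma uniform_cdf_cdfM:
  assumes "a < b" shows "uniform_cdf a b \<in> cdfM"
proof (rule cdfM_I[of _ a b])
  show "mono (uniform_cdf a b)"
    using assms unfolding uniform_cdf_def
    by (intro monoI max.mono min.mono order_refl divide_right_mono) auto
  show "continuous (at_right x) (uniform_cdf a b)" for x
    using assms unfolding uniform_cdf_def by (intro continuous_intros) auto
qed (use assms in \<open>auto simp: uniform_cdf_def divide_simps\<close>)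

lemma less_uniform_cdf_iff:
  assumes "a < b" "0 \<le> p" "p < 1"
  shows "p < uniform_cdf a b x \<longleftrightarrow> a + p * (b - a) < x"
proof -
  have "p < uniform_cdf a b x \<longleftrightarrow> p < (x - a) / (b - a)"
    using assms by (auto simp: uniform_cdf_def less_max_iff_disj)
  also have "\<dots> \<longleftrightarrow> p * (b - a) < x - a"
    using assms by (simp add: pos_less_divide_eq)
  finally show ?thesis by linarith
qed

lemma quantile_uniform_cdf:
  assumes "a < b" "0 \<le> p" "p < 1"
  shows "quantile (uniform_cdf a b) p = a + p * (b - a)"
proof -
  have "uniform_cdf a b -` {p<..} = {a + p * (b - a)<..}"
    using less_uniform_cdf_iff[OF assms] by auto
  then show ?thesis unfolding quantile_def by simp
qed

lemma uniform_cdf_vimage_atLeast_one: "a < b \<Longrightarrow> uniform_cdf a b -` {1..} = {b..}"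
  by (auto simp: uniform_cdf_def le_max_iff_disj le_divide_eq_1_pos)

context
  fixes g :: "real \<Rightarrow> real"
  assumes g_mono: "mono g"
begin

lemma bdd_below_image_greaterThan: "bdd_below (g ` {x<..})"
  by (rule bdd_below_image_mono[OF g_mono bdd_below_Ioi])

lemma tendsto_at_right_Inf_greaterThan: "(g \<longlongrightarrow> Inf (g ` {x<..})) (at_right x)"
proof (rule order_tendstoI)
  fix a assume "a < Inf (g ` {x<..})"
  then have "\<forall>y\<in>{x<..}. a < g y"
    using cINF_lower[OF bdd_below_image_greaterThan] by (meson less_le_trans)
  then show "\<forall>\<^sub>F y in at_right x. a < g y"
    by (simp add: eventually_at_right_less eventually_at_filter)
next
  fix a assume "Inf (g ` {x<..}) < a"
  then obtain y0 where y0: "x < y0" "g y0 < a"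
    using cInf_lessD[of "g ` {x<..}" a] by auto
  have "\<forall>\<^sub>F y in at_right x. y < y0"
    using y0(1) eventually_at_right_field by auto
  then show "\<forall>\<^sub>F y in at_right x. g y < a"
    by eventually_elim (use monoD[OF g_mono] y0(2) in \<open>meson le_less_trans less_imp_le\<close>)
qed

lemma mono_Inf_greaterThan: "mono (\<lambda>x. Inf (g ` {x<..}))"
  by (intro monoI cINF_greatest cINF_lower[OF bdd_below_image_greaterThan]) auto

lemma continuous_at_right_Inf_greaterThan: "continuous (at_right x) (\<lambda>x. Inf (g ` {x<..}))"
proof -
  have "\<exists>\<delta>>0. Inf (g ` {x + \<delta><..}) - Inf (g ` {x<..}) < e" if "0 < e" for e
  proof -
    obtain y where y: "x < y" "g y < Inf (g ` {x<..}) + e"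
      using \<open>0 < e\<close> cInf_lessD[of "g ` {x<..}" "Inf (g ` {x<..}) + e"] by auto
    have "Inf (g ` {x + (y - x) / 2<..}) \<le> g y"
      using y(1)
      by (intro cINF_lower[OF bdd_below_image_greaterThan]) (auto simp: field_simps)
    then show ?thesis using y by (intro exI[of _ "(y - x) / 2"]) auto
  qed
  then show ?thesis
    using continuous_at_right_real_increasing[of "\<lambda>x. Inf (g ` {x<..})" x]
      monoD[OF mono_Inf_greaterThan] by blast
qed

end

lemma distortion_comp_cdfM:
  assumes G: "G \<in> cdfM" and d: "distortion d"
  shows "mono (\<lambda>y. d (G y))" and "0 \<le> d (G y)"
proof -
  show "0 \<le> d (G y)"
    using d cdfM_nonneg[OF G, of y] cdfM_le_one[OF G, of y]
    unfolding distortion_def image_subset_iff by auto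
  show "mono (\<lambda>y. d (G y))"
    using d cdfM_nonneg[OF G] cdfM_le_one[OF G] monoD[OF cdfM_mono[OF G]]
    unfolding distortion_def by (auto intro!: monoI mono_onD[of "{0..1}" d])
qed

lemma Td_eq_Inf:
  assumes "G \<in> cdfM" "distortion d"
  shows "Td d G = (\<lambda>x. Inf ((\<lambda>y. d (G y)) ` {x<..}))"
  using distortion_comp_cdfM(1)[OF assms]
  by (auto simp: Td_def intro!: ext tendsto_Lim tendsto_at_right_Inf_greaterThan)

lemma Td_cdfM:
  assumes G: "G \<in> cdfM" and d: "distortion d"
  shows "Td d G \<in> cdfM"
proof -
  let ?g = "\<lambda>y. d (G y)"
  note g = distortion_comp_cdfM(1)[OF assms]
  obtain a b where ab: "\<And>x. x < a \<Longrightarrow> G x = 0" "\<And>x. b \<le> x \<Longrightarrow> G x = 1"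
    using cdfM_support[OF G] by metis
  have d01: "d 0 = 0" "d 1 = 1" using d unfolding distortion_def by auto
  show ?thesis unfolding Td_eq_Inf[OF assms]
  proof (rule cdfM_I[of _ a b])
    show "Inf (?g ` {x<..}) = 0" if "x < a" for x
    proof (rule cInf_eq_minimum)
      show "0 \<in> ?g ` {x<..}"
        using that ab(1)[of "(x + a) / 2"] d01 by (auto intro!: image_eqI[of _ _ "(x + a) / 2"])
    qed (use distortion_comp_cdfM(2)[OF assms] in auto)
    show "Inf (?g ` {x<..}) = 1" if "b \<le> x" for x
    proof -
      have "?g ` {x<..} = {1}"
        using that ab(2) d01 by (auto intro!: image_eqI[of _ _ "x + 1"])
      then show ?thesis by simp
    qed
  qed (use mono_Inf_greaterThan[OF g] continuous_at_right_Inf_greaterThan[OF g] in auto)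
qed

lemma Td_indicator:
  assumes G: "G \<in> cdfM" and A: "distortion (indicator A)"
  shows "Td (indicator A) G = dirac_cdf (Inf (G -` A))"
proof
  fix x
  let ?g = "\<lambda>y. indicator A (G y) :: real" and ?c = "Inf (G -` A)"
  show "Td (indicator A) G x = dirac_cdf ?c x"
  proof (cases "?c \<le> x")
    case True
    then have "?g ` {x<..} = {1}"
      using cdfM_in_if_Inf_vimage_less[OF G A] by (auto intro!: image_eqI[of _ _ "x + 1"])
    then show ?thesis using True by (simp add: Td_eq_Inf[OF G A] dirac_cdf_def)
  next
    case False
    then have "?g ((x + ?c) / 2) = 0"
      using Inf_cdfM_vimage_le[OF G A, of "(x + ?c) / 2"] by (auto split: split_indicator)
    then have "Inf (?g ` {x<..}) = 0"
      using False by (intro cInf_eq_minimum) (auto intro!: image_eqI[of _ _ "(x + ?c) / 2"])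
    then show ?thesis using False by (simp add: Td_eq_Inf[OF G A] dirac_cdf_def)
  qed
qed

lemma quantile_Td:
  assumes G: "G \<in> cdfM" and d: "distortion d" and p: "0 \<le> p" "p < 1"
  shows "quantile (Td d G) p = Inf (G -` {s. p < d s})"
proof -
  let ?g = "\<lambda>y. d (G y)" and ?S = "G -` {s. p < d s}" and ?R = "Td d G -` {p<..}"
  note g = distortion_comp_cdfM(1)[OF G d]
  note A = distortion_indicator_level_set[OF d p] and P = distortion_indicator_greaterThan[OF p]
  note H = Td_cdfM[OF G d]
  have Td: "Td d G y = Inf (?g ` {y<..})" for y by (simp add: Td_eq_Inf[OF G d])
  have "?S \<subseteq> ?R"
  proof
    fix y assume "y \<in> ?S"
    moreover have "?g y \<le> Inf (?g ` {y<..})"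
      by (intro cINF_greatest) (auto intro: monoD[OF g])
    ultimately show "y \<in> ?R" by (simp add: Td)
  qed
  then have "Inf ?R \<le> Inf ?S"
    by (intro cInf_superset_mono cdfM_vimage_nonempty[OF G A] cdfM_vimage_bdd_below[OF H P])
  moreover have "Inf ?S \<le> Inf ?R"
  proof (rule cInf_greatest[OF cdfM_vimage_nonempty[OF H P]])
    fix y assume "y \<in> ?R"
    show "Inf ?S \<le> y"
    proof (rule dense_ge)
      fix z assume "y < z"
      then have "p < ?g z"
        using \<open>y \<in> ?R\<close> cINF_lower[OF bdd_below_image_greaterThan[OF g, of y], of z]
        by (simp add: Td)
      then show "Inf ?S \<le> z" using Inf_cdfM_vimage_le[OF G A] by simp
    qed
  qed
  ultimately show ?thesis unfolding quantile_def by simp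
qed

lemma cdfM_tendsto_at_bot:
  assumes "F \<in> cdfM" shows "(F \<longlongrightarrow> 0) at_bot"
proof -
  obtain a where "\<And>x. x < a \<Longrightarrow> F x = 0" using cdfM_support[OF assms] by metis
  then have "\<forall>\<^sub>F x in at_bot. F x = 0"
    unfolding eventually_at_bot_linorder by (intro exI[of _ "a - 1"]) auto
  then show ?thesis by (rule tendsto_eventually)
qed

lemma cdfM_tendsto_at_top:
  assumes "F \<in> cdfM" shows "(F \<longlongrightarrow> 1) at_top"
proof -
  obtain b where "\<And>x. b \<le> x \<Longrightarrow> F x = 1" using cdfM_support[OF assms] by metis
  then have "\<forall>\<^sub>F x in at_top. F x = 1" unfolding eventually_at_top_linorder by blast
  then show ?thesis by (rule tendsto_eventually)
qed

lemma real_distribution_interval_measure_cdfM: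
  assumes "F \<in> cdfM" shows "real_distribution (interval_measure F)"
  using monoD[OF cdfM_mono[OF assms]] cdfM_continuous_at_right[OF assms]
    cdfM_tendsto_at_bot[OF assms] cdfM_tendsto_at_top[OF assms]
  by (rule real_distribution_interval_measure)

lemma measure_interval_measure_atMost_cdfM:
  assumes "F \<in> cdfM" shows "measure (interval_measure F) {..t} = F t"
  using monoD[OF cdfM_mono[OF assms]] cdfM_continuous_at_right[OF assms]
    cdfM_tendsto_at_bot[OF assms]
  by (rule measure_interval_measure_Iic)

lemma utility_sublevelE:
  assumes u: "utility u"
  obtains "{t. u t \<le> y} = {}" | "{t. u t \<le> y} = UNIV" | s where "{t. u t \<le> y} = {..s}"
proof (cases "{t. u t \<le> y} = {} \<or> {t. u t \<le> y} = UNIV")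
  case False
  let ?S = "{t. u t \<le> y}"
  have "mono u" and "continuous_on UNIV u" using u unfolding utility_def by auto
  obtain t0 where "t0 \<notin> ?S" using False by blast
  then have "y < u t0" by simp
  have "t < t0" if "t \<in> ?S" for t
  proof (rule ccontr)
    assume "\<not> t < t0"
    then have "u t0 \<le> u t" using monoD[OF \<open>mono u\<close>] by simp
    then show False using that \<open>y < u t0\<close> by simp
  qed
  then have bdd: "bdd_above ?S" by (meson bdd_aboveI less_imp_le)
  have "Sup ?S \<in> ?S"
    using False bdd closed_Collect_le[OF \<open>continuous_on UNIV u\<close> continuous_on_const]
    by (intro closed_contains_Sup) auto
  then have "?S = {..Sup ?S}"
    using cSup_upper[OF _ bdd] monoD[OF \<open>mono u\<close>] by (auto intro: order_trans)
  then show thesis by (rule that(3))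
qed (use that in blast)

lemma utility_measurable_interval_measure:
  assumes "utility u" shows "u \<in> borel_measurable (interval_measure F)"
proof -
  have "u \<in> borel_measurable borel"
    using assms unfolding utility_def by (intro borel_measurable_continuous_onI) simp
  then show ?thesis by simp
qed

lemma Tu_in_iff:
  assumes F: "F \<in> cdfM" and u: "utility u" and A: "distortion (indicator A)"
  shows "Tu u F y \<in> A \<longleftrightarrow> (\<exists>t. u t \<le> y \<and> F t \<in> A)"
proof -
  let ?M = "interval_measure F"
  interpret real_distribution ?M by (rule real_distribution_interval_measure_cdfM[OF F])
  have Tu: "Tu u F y = measure ?M {t. u t \<le> y}"
    using utility_measurable_interval_measure[OF u]
    unfolding Tu_def cdf_def by (simp add: measure_distr vimage_def)
  from u show ?thesis
  proof (cases rule: utility_sublevelE[where y = y])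
    case 1
    then show ?thesis using Tu distortion_indicatorD(1)[OF A] by auto
  next
    case 2
    obtain b where "F b = 1" using cdfM_support[OF F] by (metis order_refl)
    moreover have "u b \<le> y" using 2 by blast
    moreover have "Tu u F y = 1" using 2 Tu prob_space by simp
    ultimately show ?thesis using distortion_indicatorD(2)[OF A] by metis
  next
    case (3 s)
    then have "Tu u F y = F s" using Tu measure_interval_measure_atMost_cdfM[OF F] by simp
    then show ?thesis using 3 cdfM_vimage_upward[OF F A] by auto
  qed
qed

lemma Tu_cdfM:
  assumes F: "F \<in> cdfM" and u: "utility u"
  shows "Tu u F \<in> cdfM"
proof -
  let ?M = "distr (interval_measure F) borel u"
  interpret M: real_distribution "interval_measure F"
    by (rule real_distribution_interval_measure_cdfM[OF F])
  interpret real_distribution ?M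
    using utility_measurable_interval_measure[OF u] by simp
  obtain a b where ab: "\<And>x. x < a \<Longrightarrow> F x = 0" "\<And>x. b \<le> x \<Longrightarrow> F x = 1"
    using cdfM_support[OF F] by metis
  have "mono u" using u unfolding utility_def by simp
  show ?thesis
  proof (rule cdfM_I[of _ "u a" "u b"])
    show "mono (Tu u F)" unfolding Tu_def by (intro monoI cdf_nondecreasing)
    show "continuous (at_right x) (Tu u F)" for x unfolding Tu_def by (rule cdf_is_right_cont)
    show "Tu u F y = 0" if "y < u a" for y
    proof -
      have "F t = 0" if "u t \<le> y" for t
        using ab(1) monoD[OF \<open>mono u\<close>, of a t] \<open>y < u a\<close> that by force
      then have "Tu u F y \<notin> {0<..}"
        using Tu_in_iff[OF F u distortion_indicator_greaterThan[of 0]] by auto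
      then show ?thesis using cdf_nonneg[of y] unfolding Tu_def by simp
    qed
    show "Tu u F y = 1" if "u b \<le> y" for y
    proof -
      have "Tu u F y \<in> {1..}"
        using Tu_in_iff[OF F u distortion_indicator_atLeast[of 1]] ab(2) that by auto
      then show ?thesis using cdf_bounded_prob[of y] unfolding Tu_def by simp
    qed
  qed
qed

lemma Inf_upward_closure:
  fixes S :: "real set"
  assumes "S \<noteq> {}" "bdd_below S"
  shows "Inf {y. \<exists>s\<in>S. s \<le> y} = Inf S"
proof (rule antisym)
  show "Inf {y. \<exists>s\<in>S. s \<le> y} \<le> Inf S"
    using assms by (intro cInf_superset_mono) (auto simp: bdd_below_def intro: order_trans)
  show "Inf S \<le> Inf {y. \<exists>s\<in>S. s \<le> y}"
    using assms by (intro cInf_greatest) (auto intro: cInf_lower2)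
qed

lemma Inf_Tu_vimage:
  assumes F: "F \<in> cdfM" and u: "utility u" and A: "distortion (indicator A)"
  shows "Inf (Tu u F -` A) = u (Inf (F -` A))"
proof -
  have "mono u" and "continuous (at_right (Inf (F -` A))) u"
    using u unfolding utility_def
    by (auto simp: continuous_on_eq_continuous_at continuous_at_imp_continuous_at_within)
  note ne = cdfM_vimage_nonempty[OF F A] and bdd = cdfM_vimage_bdd_below[OF F A]
  have "Inf (Tu u F -` A) = Inf {y. \<exists>s\<in>u ` (F -` A). s \<le> y}"
    using Tu_in_iff[OF F u A] by (intro arg_cong[where f = Inf]) blast
  also have "\<dots> = Inf (u ` (F -` A))"
    using ne bdd_below_image_mono[OF \<open>mono u\<close> bdd] by (intro Inf_upward_closure) auto
  also have "\<dots> = u (Inf (F -` A))"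
    using continuous_at_Inf_mono[OF \<open>mono u\<close> _ ne bdd] \<open>continuous (at_right _) u\<close> by simp
  finally show ?thesis .
qed

lemma quantile_Tu:
  assumes "F \<in> cdfM" "utility u" "0 \<le> p" "p < 1"
  shows "quantile (Tu u F) p = u (quantile F p)"
  unfolding quantile_def using assms by (intro Inf_Tu_vimage distortion_indicator_greaterThan)

lemma Tu_Td_commute:
  assumes F: "F \<in> cdfM" and d: "distortion d" and u: "utility u"
  shows "Tu u (Td d F) = Td d (Tu u F)"
proof (rule cdfM_eq_if_quantile_eq)
  show "Tu u (Td d F) \<in> cdfM" by (intro Tu_cdfM Td_cdfM assms)
  show "Td d (Tu u F) \<in> cdfM" by (intro Tu_cdfM Td_cdfM assms)
  fix p :: real assume p: "0 \<le> p" "p < 1"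
  have "quantile (Tu u (Td d F)) p = u (Inf (F -` {s. p < d s}))"
    by (simp only: quantile_Tu[OF Td_cdfM[OF F d] u p] quantile_Td[OF F d p])
  also have "\<dots> = quantile (Td d (Tu u F)) p"
    by (simp only: quantile_Td[OF Tu_cdfM[OF F u] d p]
        Inf_Tu_vimage[OF F u distortion_indicator_level_set[OF d p]])
  finally show "quantile (Tu u (Td d F)) p = quantile (Td d (Tu u F)) p" .
qed

locale distortion_commuting =
  fixes T :: "(real \<Rightarrow> real) \<Rightarrow> (real \<Rightarrow> real)"
  assumes T_cdfM: "F \<in> cdfM \<Longrightarrow> T F \<in> cdfM"
    and T_Td_commute: "distortion d \<Longrightarrow> F \<in> cdfM \<Longrightarrow> T (Td d F) = Td d (T F)"
begin

definition u :: "real \<Rightarrow> real" where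
  "u c = quantile (T (dirac_cdf c)) 0"

lemma T_dirac_cdf: "T (dirac_cdf c) = dirac_cdf (u c)"
proof -
  have A: "distortion (indicator {0<..})" by (rule distortion_indicator_greaterThan) auto
  have "T (dirac_cdf c) = T (Td (indicator {0<..}) (dirac_cdf c))"
    by (simp add: Td_indicator[OF dirac_cdf_cdfM A] Inf_dirac_cdf_vimage[OF A])
  also have "\<dots> = Td (indicator {0<..}) (T (dirac_cdf c))"
    by (rule T_Td_commute[OF A dirac_cdf_cdfM])
  also have "\<dots> = dirac_cdf (u c)"
    by (simp add: Td_indicator[OF T_cdfM[OF dirac_cdf_cdfM] A] u_def quantile_def)
  finally show ?thesis .
qed

lemma Inf_T_vimage:
  assumes F: "F \<in> cdfM" and A: "distortion (indicator A)"
  shows "Inf (T F -` A) = u (Inf (F -` A))"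
proof -
  have "dirac_cdf (Inf (T F -` A)) = Td (indicator A) (T F)"
    by (simp add: Td_indicator[OF T_cdfM[OF F] A])
  also have "\<dots> = T (Td (indicator A) F)" by (simp add: T_Td_commute[OF A F])
  also have "\<dots> = dirac_cdf (u (Inf (F -` A)))" by (simp add: Td_indicator[OF F A] T_dirac_cdf)
  finally show ?thesis by (simp add: dirac_cdf_eq_iff)
qed

lemma quantile_T: "F \<in> cdfM \<Longrightarrow> 0 \<le> p \<Longrightarrow> p < 1 \<Longrightarrow> quantile (T F) p = u (quantile F p)"
  unfolding quantile_def by (intro Inf_T_vimage distortion_indicator_greaterThan)

lemma quantile_T_uniform_cdf:
  "a < b \<Longrightarrow> 0 \<le> p \<Longrightarrow> p < 1 \<Longrightarrow> quantile (T (uniform_cdf a b)) p = u (a + p * (b - a))"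
  by (simp add: quantile_T uniform_cdf_cdfM quantile_uniform_cdf)

lemma Inf_T_uniform_cdf_vimage_atLeast_one:
  "a < b \<Longrightarrow> Inf (T (uniform_cdf a b) -` {1..}) = u b"
  using Inf_T_vimage[OF uniform_cdf_cdfM distortion_indicator_atLeast[of 1]]
  by (simp add: uniform_cdf_vimage_atLeast_one)

lemma mono_u: "mono u"
proof
  fix a b :: real assume "a \<le> b"
  show "u a \<le> u b"
  proof (cases "a = b")
    case False
    then have "a < b" using \<open>a \<le> b\<close> by simp
    let ?G = "T (uniform_cdf a b)"
    have "u a = Inf (?G -` {0<..})"
      using quantile_T_uniform_cdf[OF \<open>a < b\<close>, of 0] by (simp add: quantile_def)
    also have "\<dots> \<le> Inf (?G -` {1..})"
      using \<open>a < b\<close> by (intro Inf_cdfM_vimage_antimono T_cdfM uniform_cdf_cdfM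
          distortion_indicator_greaterThan distortion_indicator_atLeast) auto
    also have "\<dots> = u b" using Inf_T_uniform_cdf_vimage_atLeast_one[OF \<open>a < b\<close>] .
    finally show ?thesis .
  qed simp
qed

lemma continuous_at_right_u: "continuous (at_right x) u"
proof -
  let ?G = "T (uniform_cdf x (x + 1))"
  have G: "?G \<in> cdfM" by (simp add: T_cdfM uniform_cdf_cdfM)
  have q: "quantile ?G p = u (x + p)" if "0 \<le> p" "p < 1" for p
    using quantile_T_uniform_cdf[of x "x + 1" p] that by simp
  have "\<exists>\<delta>>0. u (x + \<delta>) - u x < e" if "0 < e" for e
  proof -
    have A: "distortion (indicator {0<..})" by (rule distortion_indicator_greaterThan) auto
    have "Inf (?G -` {0<..}) < u x + e" using q[of 0] \<open>0 < e\<close> by (simp add: quantile_def)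
    then obtain y where y: "0 < ?G y" "y < u x + e"
      using cInf_lessD[OF cdfM_vimage_nonempty[OF G A]] by auto
    define p where "p = min (?G y / 2) (1 / 2)"
    have p: "0 < p" "p < 1" "p < ?G y" using y(1) by (auto simp: p_def)
    then have "quantile ?G p \<le> y"
      using Inf_cdfM_vimage_le[OF G distortion_indicator_greaterThan[of p]]
      unfolding quantile_def by auto
    then show ?thesis using q[of p] p y(2) by (intro exI[of _ p]) auto
  qed
  then show ?thesis using continuous_at_right_real_increasing[of u x] monoD[OF mono_u] by blast
qed

lemma continuous_at_left_u: "continuous (at_left x) u"
proof -
  let ?G = "T (uniform_cdf (x - 1) x)"
  have G: "?G \<in> cdfM" by (simp add: T_cdfM uniform_cdf_cdfM)
  have q: "quantile ?G p = u (x - (1 - p))" if "0 \<le> p" "p < 1" for p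
    using quantile_T_uniform_cdf[of "x - 1" x p] that by (simp add: algebra_simps)
  \<comment> \<open>The quantiles \<open>u (x - (1 - p))\<close> of \<open>?G\<close> accumulate at the right end \<open>u x\<close> of its support.\<close>
  have "\<exists>\<delta>>0. u x - u (x - \<delta>) < e" if "0 < e" for e
  proof (rule ccontr)
    assume "\<not> ?thesis"
    then have le: "u (x - \<delta>) \<le> u x - e" if "0 < \<delta>" for \<delta> using that by force
    define z where "z = u x - e / 2"
    have "p < ?G z" if p: "0 \<le> p" "p < 1" for p
    proof -
      have "quantile ?G p < z" using q[OF p] le[of "1 - p"] p \<open>0 < e\<close> by (simp add: z_def)
      then show ?thesis
        using cdfM_in_if_Inf_vimage_less[OF G distortion_indicator_greaterThan[OF p]]
        unfolding quantile_def by simp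
    qed
    then have "1 \<le> ?G z" using cdfM_nonneg[OF G, of z] by (meson less_irrefl not_le)
    then have "u x \<le> z"
      using Inf_cdfM_vimage_le[OF G distortion_indicator_atLeast[of 1]]
        Inf_T_uniform_cdf_vimage_atLeast_one[of "x - 1" x] by simp
    then show False using \<open>0 < e\<close> by (simp add: z_def)
  qed
  then show ?thesis using continuous_at_left_real_increasing[of u x] monoD[OF mono_u] by blast
qed

lemma utility_u: "utility u"
  unfolding utility_def using mono_u continuous_at_left_u continuous_at_right_u
  by (simp add: continuous_at_split continuous_at_imp_continuous_on)

lemma T_eq_Tu:
  assumes "F \<in> cdfM" shows "T F = Tu u F"
proof (rule cdfM_eq_if_quantile_eq)
  show "T F \<in> cdfM" "Tu u F \<in> cdfM" using assms utility_u by (auto intro: T_cdfM Tu_cdfM)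
  show "quantile (T F) p = quantile (Tu u F) p" if "0 \<le> p" "p < 1" for p
    using quantile_T[OF assms that] quantile_Tu[OF assms utility_u that] by simp
qed

end

theorem theorem2:
  fixes T :: "(real \<Rightarrow> real) \<Rightarrow> (real \<Rightarrow> real)"
  assumes "\<forall>F\<in>cdfM. T F \<in> cdfM"
  shows "(\<forall>d. distortion d \<longrightarrow> (\<forall>F\<in>cdfM. T (Td d F) = Td d (T F)))
         \<longleftrightarrow> (\<exists>u. utility u \<and> (\<forall>F\<in>cdfM. T F = Tu u F))"
proof
  assume "\<forall>d. distortion d \<longrightarrow> (\<forall>F\<in>cdfM. T (Td d F) = Td d (T F))"
  then interpret distortion_commuting T using assms by unfold_locales auto
  show "\<exists>u. utility u \<and> (\<forall>F\<in>cdfM. T F = Tu u F)" using utility_u T_eq_Tu by blast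
next
  assume "\<exists>u. utility u \<and> (\<forall>F\<in>cdfM. T F = Tu u F)"
  then obtain u where "utility u" and "\<And>F. F \<in> cdfM \<Longrightarrow> T F = Tu u F" by blast
  then show "\<forall>d. distortion d \<longrightarrow> (\<forall>F\<in>cdfM. T (Td d F) = Td d (T F))"
    by (simp add: Td_cdfM Tu_Td_commute)
qed

end
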